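(* An ordered GIFS $(\mathcal A,\Gamma,(g_\gamma)_{\gamma\in\Gamma},\prec)$ is a linear GIFS if and only if it satisfies the chain condition.
   Context: A graph-directed iterated function system (GIFS) consists of a finite directed graph $(\mathcal A,\Gamma)$ with vertex set $\mathcal A=\{1,\dots,N\}$ and finite edge set $\Gamma$ (loops and multiple edges allowed), in which every vertex has at least one outgoing edge, together with contracting similitudes $g_\gamma:\mathbb R^d\to\mathbb R^d$, $\gamma\in\Gamma$. Let $\Gamma_{ij}$ be the set of edges from $i$ to $j$ and $\Gamma_i$ the set of edges starting at $i$; $t(\gamma)$ is the terminal vertex of an edge or path $\gamma$. The invariant sets are the unique nonempty compact sets $E_1,\dots,E_N$ with $E_i=\bigcup_{j}\bigcup_{\gamma\in\Gamma_{ij}}g_\gamma(E_j)$. A path is a sequence of edges $\omega_1\omega_2\cdots$ such that the terminal vertex of $\omega_m$ is the initial vertex of $\omega_{m+1}$; $\Gamma_i^k$ (resp. $\Gamma_i^\infty$) denotes the set of paths of length $k$ (resp. infinite paths) starting at $i$, and $\omega|_n$ is the prefix of length $n$. For a finite path $\gamma=\gamma_1\dots\gamma_n$, put $g_\gamma=g_{\gamma_1}\circ\cdots\circ g_{\gamma_n}$ and $E_\gamma=g_\gamma(E_{t(\gamma)})$. The projection $\pi_i:\Gamma_i^\infty\to E_i$ is given by $\{\pi_i(\omega)\}=\bigcap_{n\ge1}E_{\omega|_n}$. An ordered GIFS is a GIFS together with a partial order $\prec$ on $\Gamma$ whose restriction to each $\Gamma_i$ is a linear order, and such that edges in $\Gamma_i$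 and $\Gamma_j$ are incomparable for $i\neq j$. It induces the dictionary order on each $\Gamma_i^k$: $\gamma_1\dots\gamma_k\prec\omega_1\dots\omega_k$ iff for some $\ell$, $\gamma_1\dots\gamma_{\ell-1}=\omega_1\dots\omega_{\ell-1}$ and $\gamma_\ell\prec\omega_\ell$. Two paths of $\Gamma_i^k$ (or two edges of $\Gamma_i$) are adjacent if they are consecutive in this linear order. The ordered GIFS is a linear GIFS if $E_\gamma\cap E_\omega\neq\emptyset$ for all $i$, $k\ge1$ and all adjacent $\gamma,\omega\in\Gamma_i^k$. The lowest path of $\Gamma_i^\infty$ is the infinite path $\omega\in\Gamma_i^\infty$ such that $\omega|_n$ is the smallest element of $\Gamma_i^n$ for every $n$; its image $\pi_i(\omega)$ is the head of $E_i$. Similarly the highest path $\omega'$ has $\omega'|_n$ the largest element of $\Gamma_i^n$ for all $n$, and $\pi_i(\omega')$ is the tail of $E_i$. The ordered GIFS satisfies the chain condition if for every $i\in\mathcal A$ and every two adjacent edges $\omega,\gamma\in\Gamma_i$ with $\omega\prec\gamma$, $g_\omega(\text{tail of }E_{t(\omega)})=g_\gamma(\text{head of }E_{t(\gamma)})$. *)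

theory Defs
  imports "HOL-Analysis.Analysis"
begin

definition contracting_similitude :: "('a::metric_space \<Rightarrow> 'a) \<Rightarrow> bool" where
  "contracting_similitude f \<longleftrightarrow>
     (\<exists>r. 0 < r \<and> r < 1 \<and> (\<forall>x y. dist (f x) (f y) = r * dist x y))"

definition gifs :: "'v set \<Rightarrow> 'e set \<Rightarrow> ('e \<Rightarrow> 'v) \<Rightarrow> ('e \<Rightarrow> 'v)
                    \<Rightarrow> ('e \<Rightarrow> 'a::metric_space \<Rightarrow> 'a) \<Rightarrow> bool" where
  "gifs V G s t g \<longleftrightarrow> finite V \<and> finite G
     \<and> (\<forall>e\<in>G. s e \<in> V \<and> t e \<in> V)
     \<and> (\<forall>i\<in>V. \<exists>e\<in>G. s e = i)
     \<and> (\<forall>e\<in>G. contracting_similitude (g e))"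

definition invariant_sets :: "'v set \<Rightarrow> 'e set \<Rightarrow> ('e \<Rightarrow> 'v) \<Rightarrow> ('e \<Rightarrow> 'v)
                    \<Rightarrow> ('e \<Rightarrow> 'a::metric_space \<Rightarrow> 'a) \<Rightarrow> ('v \<Rightarrow> 'a set) \<Rightarrow> bool" where
  "invariant_sets V G s t g E \<longleftrightarrow>
     (\<forall>i\<in>V. E i \<noteq> {} \<and> compact (E i)
        \<and> E i = (\<Union>e\<in>{e\<in>G. s e = i}. g e ` E (t e)))"

definition ordered :: "'v set \<Rightarrow> 'e set \<Rightarrow> ('e \<Rightarrow> 'v) \<Rightarrow> ('e \<Rightarrow> 'e \<Rightarrow> bool) \<Rightarrow> bool" where
  "ordered V G s prec \<longleftrightarrow>
     (\<forall>a b. prec a b \<longrightarrow> a \<in> G \<and> b \<in> G \<and> s a = s b)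
     \<and> (\<forall>a\<in>G. \<not> prec a a)
     \<and> (\<forall>a b c. prec a b \<and> prec b c \<longrightarrow> prec a c)
     \<and> (\<forall>a\<in>G. \<forall>b\<in>G. s a = s b \<and> a \<noteq> b \<longrightarrow> prec a b \<or> prec b a)"

definition paths :: "('e \<Rightarrow> 'v) \<Rightarrow> ('e \<Rightarrow> 'v) \<Rightarrow> 'e set \<Rightarrow> 'v \<Rightarrow> nat \<Rightarrow> 'e list set" where
  "paths s t G i k = {p. length p = k \<and> set p \<subseteq> G \<and> (k > 0 \<longrightarrow> s (hd p) = i)
       \<and> (\<forall>m. Suc m < k \<longrightarrow> t (p ! m) = s (p ! Suc m))}"

definition ipaths :: "('e \<Rightarrow> 'v) \<Rightarrow> ('e \<Rightarrow> 'v) \<Rightarrow> 'e set \<Rightarrow> 'v \<Rightarrow> (nat \<Rightarrow> 'e) set" where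
  "ipaths s t G i = {w. (\<forall>m. w m \<in> G) \<and> s (w 0) = i \<and> (\<forall>m. t (w m) = s (w (Suc m)))}"

definition pref :: "(nat \<Rightarrow> 'e) \<Rightarrow> nat \<Rightarrow> 'e list" where
  "pref w n = map w [0..<n]"

definition gcomp :: "('e \<Rightarrow> 'a \<Rightarrow> 'a) \<Rightarrow> 'e list \<Rightarrow> 'a \<Rightarrow> 'a" where
  "gcomp g p = foldr (\<lambda>e f. g e \<circ> f) p id"

definition cyl :: "('e \<Rightarrow> 'a \<Rightarrow> 'a) \<Rightarrow> ('e \<Rightarrow> 'v) \<Rightarrow> ('v \<Rightarrow> 'a set) \<Rightarrow> 'e list \<Rightarrow> 'a set" where
  "cyl g t E p = gcomp g p ` E (t (last p))"

definition dict :: "('e \<Rightarrow> 'e \<Rightarrow> bool) \<Rightarrow> nat \<Rightarrow> 'e list \<Rightarrow> 'e list \<Rightarrow> bool" where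
  "dict prec k p q \<longleftrightarrow> (\<exists>l<k. take l p = take l q \<and> prec (p ! l) (q ! l))"

definition adjacent :: "('x \<Rightarrow> 'x \<Rightarrow> bool) \<Rightarrow> 'x set \<Rightarrow> 'x \<Rightarrow> 'x \<Rightarrow> bool" where
  "adjacent R S p q \<longleftrightarrow> p \<in> S \<and> q \<in> S \<and> R p q \<and> \<not> (\<exists>r\<in>S. R p r \<and> R r q)"

definition linear_gifs :: "'v set \<Rightarrow> 'e set \<Rightarrow> ('e \<Rightarrow> 'v) \<Rightarrow> ('e \<Rightarrow> 'v)
      \<Rightarrow> ('e \<Rightarrow> 'a \<Rightarrow> 'a) \<Rightarrow> ('v \<Rightarrow> 'a set) \<Rightarrow> ('e \<Rightarrow> 'e \<Rightarrow> bool) \<Rightarrow> bool" where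
  "linear_gifs V G s t g E prec \<longleftrightarrow>
     (\<forall>i\<in>V. \<forall>k\<ge>1. \<forall>p q. adjacent (dict prec k) (paths s t G i k) p q
         \<longrightarrow> cyl g t E p \<inter> cyl g t E q \<noteq> {})"

definition proj :: "('e \<Rightarrow> 'a \<Rightarrow> 'a) \<Rightarrow> ('e \<Rightarrow> 'v) \<Rightarrow> ('v \<Rightarrow> 'a set) \<Rightarrow> (nat \<Rightarrow> 'e) \<Rightarrow> 'a" where
  "proj g t E w = (THE x. (\<Inter>n\<in>{1..}. cyl g t E (pref w n)) = {x})"

definition lowest_path :: "('e \<Rightarrow> 'v) \<Rightarrow> ('e \<Rightarrow> 'v) \<Rightarrow> 'e set \<Rightarrow> ('e \<Rightarrow> 'e \<Rightarrow> bool)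
      \<Rightarrow> 'v \<Rightarrow> (nat \<Rightarrow> 'e) \<Rightarrow> bool" where
  "lowest_path s t G prec i w \<longleftrightarrow> w \<in> ipaths s t G i \<and>
     (\<forall>n\<ge>1. \<forall>p\<in>paths s t G i n. p \<noteq> pref w n \<longrightarrow> dict prec n (pref w n) p)"

definition highest_path :: "('e \<Rightarrow> 'v) \<Rightarrow> ('e \<Rightarrow> 'v) \<Rightarrow> 'e set \<Rightarrow> ('e \<Rightarrow> 'e \<Rightarrow> bool)
      \<Rightarrow> 'v \<Rightarrow> (nat \<Rightarrow> 'e) \<Rightarrow> bool" where
  "highest_path s t G prec i w \<longleftrightarrow> w \<in> ipaths s t G i \<and>
     (\<forall>n\<ge>1. \<forall>p\<in>paths s t G i n. p \<noteq> pref w n \<longrightarrow> dict prec n p (pref w n))"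

definition head :: "'e set \<Rightarrow> ('e \<Rightarrow> 'v) \<Rightarrow> ('e \<Rightarrow> 'v) \<Rightarrow> ('e \<Rightarrow> 'a \<Rightarrow> 'a) \<Rightarrow> ('v \<Rightarrow> 'a set)
      \<Rightarrow> ('e \<Rightarrow> 'e \<Rightarrow> bool) \<Rightarrow> 'v \<Rightarrow> 'a" where
  "head G s t g E prec i = proj g t E (THE w. lowest_path s t G prec i w)"

definition tail :: "'e set \<Rightarrow> ('e \<Rightarrow> 'v) \<Rightarrow> ('e \<Rightarrow> 'v) \<Rightarrow> ('e \<Rightarrow> 'a \<Rightarrow> 'a) \<Rightarrow> ('v \<Rightarrow> 'a set)
      \<Rightarrow> ('e \<Rightarrow> 'e \<Rightarrow> bool) \<Rightarrow> 'v \<Rightarrow> 'a" where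
  "tail G s t g E prec i = proj g t E (THE w. highest_path s t G prec i w)"

definition chain_condition :: "'v set \<Rightarrow> 'e set \<Rightarrow> ('e \<Rightarrow> 'v) \<Rightarrow> ('e \<Rightarrow> 'v)
      \<Rightarrow> ('e \<Rightarrow> 'a \<Rightarrow> 'a) \<Rightarrow> ('v \<Rightarrow> 'a set) \<Rightarrow> ('e \<Rightarrow> 'e \<Rightarrow> bool) \<Rightarrow> bool" where
  "chain_condition V G s t g E prec \<longleftrightarrow>
     (\<forall>i\<in>V. \<forall>a b. adjacent prec {e\<in>G. s e = i} a b
        \<longrightarrow> g a (tail G s t g E prec (t a)) = g b (head G s t g E prec (t b)))"

end

theory Submission
  imports Defs
begin

text \<open>
  Two adjacent paths of length k always have the form u a h and u b l, where a and b are
  adjacent edges, h is a prefix of the highest path from t(a) and l a prefix of the lowest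
  path from t(b): any other choice of h, l or of the branching edges would leave room for a
  path strictly between them; conversely every such pair is adjacent. Under the chain
  condition, g_u(g_a(tail of E_t(a))) = g_u(g_b(head of E_t(b))) is therefore a common point
  of the two cylinders. Under linearity, the cylinders of a h|m and b l|m meet for every m;
  they contain g_a(tail of E_t(a)) and g_b(head of E_t(b)) respectively and have diameter
  O(r^m), so these two points coincide.
\<close>

lemma gcomp_Nil [simp]: "gcomp g [] = id"
  by (simp add: gcomp_def)

lemma gcomp_Cons [simp]: "gcomp g (e # p) = g e \<circ> gcomp g p"
  by (simp add: gcomp_def)

lemma gcomp_append: "gcomp g (p @ q) = gcomp g p \<circ> gcomp g q"
  by (induct p) auto

lemma length_pref [simp]: "length (pref w n) = n"
  by (simp add: pref_def)

lemma nth_pref [simp]: "j < n \<Longrightarrow> pref w n ! j = w j"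
  by (simp add: pref_def)

lemma pref_0 [simp]: "pref w 0 = []"
  by (simp add: pref_def)

lemma pref_Suc: "pref w (Suc n) = pref w n @ [w n]"
  by (simp add: pref_def)

lemma pathsD:
  assumes "p \<in> paths s t G i k"
  shows "length p = k" "set p \<subseteq> G" "k > 0 \<Longrightarrow> s (hd p) = i"
    "Suc m < k \<Longrightarrow> t (p ! m) = s (p ! Suc m)"
  using assms unfolding paths_def by blast+

lemma pathsI:
  assumes "length p = k" "set p \<subseteq> G" "k > 0 \<Longrightarrow> s (hd p) = i"
    "\<And>m. Suc m < k \<Longrightarrow> t (p ! m) = s (p ! Suc m)"
  shows "p \<in> paths s t G i k"
  using assms unfolding paths_def by blast

lemma Cons_in_paths_iff:
  "a # q \<in> paths s t G i (Suc m) \<longleftrightarrow> a \<in> G \<and> s a = i \<and> q \<in> paths s t G (t a) m"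
  (is "?lhs \<longleftrightarrow> ?rhs")
proof
  assume ?lhs
  note P = pathsD[OF this]
  have "q \<in> paths s t G (t a) m"
  proof (rule pathsI)
    show "s (hd q) = t a" if "m > 0"
      using P(4)[of 0] P(1) that by (cases q) auto
    show "t (q ! j) = s (q ! Suc j)" if "Suc j < m" for j
      using P(4)[of "Suc j"] that by simp
  qed (use P in auto)
  with P show ?rhs by auto
next
  assume ?rhs
  then have a: "a \<in> G" "s a = i" and Q: "q \<in> paths s t G (t a) m" by auto
  note Q' = pathsD[OF Q]
  show ?lhs
  proof (rule pathsI)
    show "t ((a # q) ! j) = s ((a # q) ! Suc j)" if "Suc j < Suc m" for j
    proof (cases j)
      case 0
      then show ?thesis using Q'(1,3) that by (cases q) auto
    next
      case (Suc j')
      then show ?thesis using Q'(4)[of j'] that by simp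
    qed
  qed (use a Q' in auto)
qed

lemma pref_in_paths:
  assumes "w \<in> ipaths s t G i"
  shows "pref w n \<in> paths s t G i n"
  using assms by (intro pathsI) (auto simp: ipaths_def pref_def hd_map)

lemma Cons_pref_in_paths:
  "a \<in> G \<Longrightarrow> w \<in> ipaths s t G (t a) \<Longrightarrow> a # pref w m \<in> paths s t G (s a) (Suc m)"
  by (simp add: Cons_in_paths_iff pref_in_paths)

lemma suffix_in_paths:
  "u @ a # x \<in> paths s t G i k \<Longrightarrow> a # x \<in> paths s t G (s a) (Suc (length x))"
proof (induct u arbitrary: i k)
  case Nil
  then show ?case using pathsD(1)[OF Nil.prems] by (cases k) (auto simp: Cons_in_paths_iff)
next
  case (Cons e u)
  then obtain k' where "k = Suc k'" using pathsD(1)[OF Cons.prems] by (cases k) auto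
  then show ?case using Cons by (auto simp: Cons_in_paths_iff)
qed

lemma branch_in_paths:
  "u @ a # x \<in> paths s t G i k \<Longrightarrow> c # y \<in> paths s t G (s a) (Suc (length x))
    \<Longrightarrow> u @ c # y \<in> paths s t G i k"
proof (induct u arbitrary: i k)
  case Nil
  then show ?case using pathsD(1)[OF Nil.prems(1)] by (cases k) (auto simp: Cons_in_paths_iff)
next
  case (Cons e u)
  then obtain k' where "k = Suc k'" using pathsD(1)[OF Cons.prems(1)] by (cases k) auto
  then show ?case using Cons by (auto simp: Cons_in_paths_iff)
qed

lemma eq_if_dist_le_geometric:
  fixes r :: real
  assumes "\<bar>r\<bar> < 1" and "\<And>n. dist x y \<le> C * r ^ n"
  shows "x = y"
proof -
  have "(\<lambda>n. C * r ^ n) \<longlonglongrightarrow> 0"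
    using assms(1) by (intro tendsto_mult_right_zero LIMSEQ_power_zero) simp
  then have "dist x y \<le> 0"
    using assms(2) by (intro LIMSEQ_le_const[of "\<lambda>n. C * r ^ n"]) auto
  then show ?thesis by simp
qed

locale gifs_system =
  fixes V :: "'v set" and G :: "'e set" and s t :: "'e \<Rightarrow> 'v"
    and g :: "'e \<Rightarrow> 'a::complete_space \<Rightarrow> 'a" and E :: "'v \<Rightarrow> 'a set"
  assumes gifs: "gifs V G s t g" and invariant: "invariant_sets V G s t g E"
begin

lemma finite_vertices: "finite V" and finite_edges: "finite G"
  using gifs by (auto simp: gifs_def)

lemma edge_vertices: "e \<in> G \<Longrightarrow> s e \<in> V" "e \<in> G \<Longrightarrow> t e \<in> V"
  using gifs by (auto simp: gifs_def)

lemma out_edge_exists: "i \<in> V \<Longrightarrow> \<exists>e\<in>G. s e = i"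
  using gifs by (auto simp: gifs_def)

lemma E_nonempty: "i \<in> V \<Longrightarrow> E i \<noteq> {}" and E_compact: "i \<in> V \<Longrightarrow> compact (E i)"
  using invariant by (auto simp: invariant_sets_def)

lemma image_E_subset: "e \<in> G \<Longrightarrow> g e ` E (t e) \<subseteq> E (s e)"
  using invariant edge_vertices(1) unfolding invariant_sets_def by blast

lemma uniform_contraction:
  obtains r where "0 < r" "r < 1" "\<And>e x y. e \<in> G \<Longrightarrow> dist (g e x) (g e y) \<le> r * dist x y"
proof -
  have "\<forall>e\<in>G. \<exists>r. 0 < r \<and> r < 1 \<and> (\<forall>x y. dist (g e x) (g e y) = r * dist x y)"
    using gifs by (auto simp: gifs_def contracting_similitude_def)
  then obtain f where f: "\<And>e. e \<in> G \<Longrightarrow> 0 < f e \<and> f e < 1 \<and> (\<forall>x y. dist (g e x) (g e y) = f e * dist x y)"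
    by metis
  \<comment> \<open>the extra \<open>1/2\<close> keeps the maximum well-defined and positive when \<open>G = {}\<close>\<close>
  define r where "r = Max (insert (1/2) (f ` G))"
  have fin: "finite (insert (1/2) (f ` G))"
    using finite_edges by simp
  have "1/2 \<le> r"
    unfolding r_def using fin by (rule Max_ge) simp
  moreover have "f e \<le> r" if "e \<in> G" for e
    unfolding r_def using fin that by (intro Max_ge) auto
  moreover have "r < 1"
    unfolding r_def using fin f by (auto simp: Max_less_iff)
  ultimately show thesis
    using f by (intro that[of r]) (auto intro!: mult_right_mono)
qed

lemma gcomp_contraction:
  assumes "\<And>e x y. e \<in> G \<Longrightarrow> dist (g e x) (g e y) \<le> r * dist x y" and "0 \<le> r"
    and "set p \<subseteq> G"
  shows "dist (gcomp g p x) (gcomp g p y) \<le> r ^ length p * dist x y"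
  using assms(3)
proof (induct p)
  case (Cons e p)
  then have "dist (gcomp g (e # p) x) (gcomp g (e # p) y) \<le> r * dist (gcomp g p x) (gcomp g p y)"
    using assms(1) by simp
  also have "\<dots> \<le> r * (r ^ length p * dist x y)"
    using Cons assms(2) by (auto intro: mult_left_mono)
  finally show ?case by (simp add: mult.assoc)
qed simp

lemma gcomp_continuous:
  assumes "set p \<subseteq> G"
  shows "continuous_on UNIV (gcomp g p)"
proof -
  obtain r where r: "0 < r" "\<And>e x y. e \<in> G \<Longrightarrow> dist (g e x) (g e y) \<le> r * dist x y"
    using uniform_contraction by metis
  have "(r ^ length p)-lipschitz_on UNIV (gcomp g p)"
    using gcomp_contraction[OF r(2) _ assms] r(1) by (intro lipschitz_onI) auto
  then show ?thesis
    by (rule lipschitz_on_continuous_on)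
qed

lemma last_in_paths: "p \<in> paths s t G i k \<Longrightarrow> 0 < k \<Longrightarrow> last p \<in> G"
  by (metis pathsD(1,2) last_in_set length_greater_0_conv subsetD)

lemma cyl_compact: "p \<in> paths s t G i k \<Longrightarrow> 0 < k \<Longrightarrow> compact (cyl g t E p)"
proof -
  assume p: "p \<in> paths s t G i k" "0 < k"
  then have "compact (E (t (last p)))"
    by (intro E_compact edge_vertices(2) last_in_paths)
  moreover have "continuous_on (E (t (last p))) (gcomp g p)"
    using gcomp_continuous[OF pathsD(2)[OF p(1)]] by (rule continuous_on_subset) simp
  ultimately show ?thesis
    unfolding cyl_def by (rule compact_continuous_image[rotated])
qed

lemma cyl_nonempty: "p \<in> paths s t G i k \<Longrightarrow> 0 < k \<Longrightarrow> cyl g t E p \<noteq> {}"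
  unfolding cyl_def using E_nonempty edge_vertices last_in_paths by blast

lemma cyl_snoc_subset:
  "p \<noteq> [] \<Longrightarrow> e \<in> G \<Longrightarrow> s e = t (last p) \<Longrightarrow> cyl g t E (p @ [e]) \<subseteq> cyl g t E p"
  using image_E_subset[of e] by (auto simp: cyl_def gcomp_append)

lemma cyl_diameter_bound:
  obtains r D where "0 < r" "r < 1"
    "\<And>i k p x y. p \<in> paths s t G i k \<Longrightarrow> 0 < k \<Longrightarrow> x \<in> cyl g t E p \<Longrightarrow> y \<in> cyl g t E p
      \<Longrightarrow> dist x y \<le> D * r ^ k"
proof -
  obtain r where r: "0 < r" "r < 1" "\<And>e x y. e \<in> G \<Longrightarrow> dist (g e x) (g e y) \<le> r * dist x y"
    using uniform_contraction by metis
  have "bounded (\<Union>v\<in>V. E v)"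
    using finite_vertices E_compact by (intro compact_imp_bounded compact_UN) auto
  then obtain D where D: "\<And>v x y. v \<in> V \<Longrightarrow> x \<in> E v \<Longrightarrow> y \<in> E v \<Longrightarrow> dist x y \<le> D"
    unfolding bounded_two_points by blast
  have "dist x y \<le> D * r ^ k"
    if p: "p \<in> paths s t G i k" "0 < k" and xy: "x \<in> cyl g t E p" "y \<in> cyl g t E p" for i k p x y
  proof -
    obtain x0 y0 where "x0 \<in> E (t (last p))" "y0 \<in> E (t (last p))"
      and "x = gcomp g p x0" "y = gcomp g p y0"
      using xy by (auto simp: cyl_def)
    moreover have "t (last p) \<in> V"
      using edge_vertices last_in_paths[OF p] by blast
    ultimately have "dist x y \<le> r ^ length p * dist x0 y0" "dist x0 y0 \<le> D"
      using gcomp_contraction[OF r(3) _ pathsD(2)[OF p(1)]] r(1) D by auto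
    moreover have "r ^ length p * dist x0 y0 \<le> r ^ length p * D"
      using \<open>dist x0 y0 \<le> D\<close> r(1) by (simp add: mult_left_mono)
    ultimately show ?thesis
      using pathsD(1)[OF p(1)] by (simp add: mult.commute)
  qed
  with r show thesis by (intro that) auto
qed

lemma proj_in_cyl:
  assumes w: "w \<in> ipaths s t G i" and n: "1 \<le> n"
  shows "proj g t E w \<in> cyl g t E (pref w n)"
proof -
  define S where "S m = cyl g t E (pref w (Suc m))" for m
  have P: "pref w (Suc m) \<in> paths s t G i (Suc m)" for m
    using pref_in_paths[OF w] .
  have closed: "closed (S m)" and nonempty: "S m \<noteq> {}" for m
    unfolding S_def using cyl_compact[OF P] cyl_nonempty[OF P] by (auto intro: compact_imp_closed)
  have "S (Suc m) \<subseteq> S m" for m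
    unfolding S_def using cyl_snoc_subset[of "pref w (Suc m)" "w (Suc m)"] w
    by (simp add: pref_Suc[of w "Suc m"] pref_Suc[of w m] ipaths_def)
  then have decreasing: "S n \<subseteq> S m" if "m \<le> n" for m n
    using lift_Suc_antimono_le[of S] that by blast
  obtain r D where r: "0 < r" "r < 1"
    and D: "\<And>i k p x y. p \<in> paths s t G i k \<Longrightarrow> 0 < k \<Longrightarrow> x \<in> cyl g t E p \<Longrightarrow> y \<in> cyl g t E p
      \<Longrightarrow> dist x y \<le> D * r ^ k"
    using cyl_diameter_bound by blast
  have shrinking: "\<exists>m. \<forall>x\<in>S m. \<forall>y\<in>S m. dist x y < \<epsilon>" if "0 < \<epsilon>" for \<epsilon>
  proof -
    have "(\<lambda>m. D * r ^ Suc m) \<longlonglongrightarrow> 0"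
      using r by (intro tendsto_mult_right_zero LIMSEQ_Suc[OF LIMSEQ_power_zero]) simp
    from order_tendstoD(2)[OF this that] obtain m where "D * r ^ Suc m < \<epsilon>"
      by (auto simp: eventually_sequentially)
    then show ?thesis
      unfolding S_def using D[OF P zero_less_Suc] by (meson le_less_trans)
  qed
  obtain x where x: "\<Inter>(range S) = {x}"
    using decreasing_closed_nest_sing[OF closed nonempty decreasing shrinking] by blast
  have "{1::nat..} = range Suc"
    by (simp add: atLeast_Suc_greaterThan[of 0, simplified] greaterThan_0)
  then have "(\<Inter>m\<in>{1..}. cyl g t E (pref w m)) = \<Inter>(range S)"
    unfolding S_def by (simp add: image_image)
  with x have "proj g t E w = x"
    by (simp add: proj_def)
  moreover have "x \<in> S (n - 1)"
    using x by blast
  ultimately show ?thesis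
    unfolding S_def using n by simp
qed

lemma proj_in_E:
  assumes "w \<in> ipaths s t G i"
  shows "proj g t E w \<in> E i"
  using proj_in_cyl[OF assms, of 1] image_E_subset[of "w 0"] assms
  by (auto simp: cyl_def pref_def ipaths_def)

lemma gcomp_proj_in_cyl:
  assumes "a \<in> G" "w \<in> ipaths s t G (t a)"
  shows "gcomp g u (g a (proj g t E w)) \<in> cyl g t E (u @ a # pref w m)"
proof -
  have "proj g t E w \<in> gcomp g (pref w m) ` E (t (last (a # pref w m)))"
  proof (cases m)
    case 0
    then show ?thesis using proj_in_E[OF assms(2)] by simp
  next
    case (Suc m')
    then have "pref w m \<noteq> []"
      by (simp add: pref_def)
    then show ?thesis using proj_in_cyl[OF assms(2), of m] Suc by (simp add: cyl_def)
  qed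
  then show ?thesis
    by (auto simp: cyl_def gcomp_append)
qed

end

locale ordered_gifs = gifs_system V G s t g E
  for V :: "'v set" and G :: "'e set" and s t :: "'e \<Rightarrow> 'v"
    and g :: "'e \<Rightarrow> 'a::complete_space \<Rightarrow> 'a" and E :: "'v \<Rightarrow> 'a set" +
  fixes R :: "'e \<Rightarrow> 'e \<Rightarrow> bool"
  assumes ordered: "ordered V G s R"
begin

lemma R_edges: "R a b \<Longrightarrow> a \<in> G \<and> b \<in> G \<and> s a = s b"
  using ordered[unfolded ordered_def, THEN conjunct1] by blast

lemma R_irrefl: "\<not> R a a"
  using ordered[unfolded ordered_def, THEN conjunct2, THEN conjunct1] R_edges by blast

lemma R_trans: "R a b \<Longrightarrow> R b c \<Longrightarrow> R a c"
  using ordered[unfolded ordered_def, THEN conjunct2, THEN conjunct2, THEN conjunct1] by blast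

lemma R_total: "a \<in> G \<Longrightarrow> b \<in> G \<Longrightarrow> s a = s b \<Longrightarrow> a \<noteq> b \<Longrightarrow> R a b \<or> R b a"
  using ordered[unfolded ordered_def, THEN conjunct2, THEN conjunct2, THEN conjunct2] by blast

lemma R_asym: "R a b \<Longrightarrow> \<not> R b a"
  using R_trans[of a b a] R_irrefl[of a] by blast

lemma ordered_converse: "ordered V G s (\<lambda>a b. R b a)"
proof -
  have "\<forall>a b. R b a \<longrightarrow> a \<in> G \<and> b \<in> G \<and> s a = s b"
    using R_edges by auto
  moreover have "\<forall>a\<in>G. \<not> R a a"
    using R_irrefl by blast
  moreover have "\<forall>a b c. R b a \<and> R c b \<longrightarrow> R c a"
    using R_trans by blast
  moreover have "\<forall>a\<in>G. \<forall>b\<in>G. s a = s b \<and> a \<noteq> b \<longrightarrow> R b a \<or> R a b"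
    using R_total by blast
  ultimately show ?thesis
    unfolding ordered_def by (intro conjI)
qed

lemma dict_Cons_Cons: "dict R (Suc m) (c # x) (d # y) \<longleftrightarrow> R c d \<or> (c = d \<and> dict R m x y)"
proof
  assume "dict R (Suc m) (c # x) (d # y)"
  then obtain l where l: "l < Suc m" "take l (c # x) = take l (d # y)" "R ((c # x) ! l) ((d # y) ! l)"
    unfolding dict_def by blast
  then show "R c d \<or> (c = d \<and> dict R m x y)"
    unfolding dict_def by (cases l) auto
next
  assume "R c d \<or> (c = d \<and> dict R m x y)"
  then show "dict R (Suc m) (c # x) (d # y)"
  proof
    assume "R c d"
    then show ?thesis unfolding dict_def by (intro exI[of _ 0]) simp
  next
    assume "c = d \<and> dict R m x y"
    then obtain l where "c = d" "l < m" "take l x = take l y" "R (x ! l) (y ! l)"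
      unfolding dict_def by blast
    then show ?thesis unfolding dict_def by (intro exI[of _ "Suc l"]) simp
  qed
qed

lemma dict_append_same: "dict R (length u + n) (u @ x) (u @ y) \<longleftrightarrow> dict R n x y"
  by (induct u) (auto simp: dict_Cons_Cons R_irrefl)

lemma dict_asym: "dict R k p q \<Longrightarrow> \<not> dict R k q p"
proof
  assume "dict R k p q" "dict R k q p"
  then obtain l1 l2 where 1: "take l1 p = take l1 q" "R (p ! l1) (q ! l1)"
    and 2: "take l2 q = take l2 p" "R (q ! l2) (p ! l2)"
    unfolding dict_def by blast
  consider "l1 < l2" | "l2 < l1" | "l1 = l2" by linarith
  then show False
  proof cases
    case 1
    then have "p ! l1 = q ! l1" using 2(1) by (metis nth_take)
    then show False using \<open>R (p ! l1) (q ! l1)\<close> R_irrefl by simp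
  next
    case 2
    then have "p ! l2 = q ! l2" using 1(1) by (metis nth_take)
    then show False using \<open>R (q ! l2) (p ! l2)\<close> R_irrefl by simp
  next
    case 3
    then show False using 1(2) 2(2) R_asym by simp
  qed
qed

lemma finite_out_edges_has_least:
  assumes "finite A" "A \<noteq> {}" "A \<subseteq> {e \<in> G. s e = v}"
  shows "\<exists>m\<in>A. \<forall>x\<in>A. x \<noteq> m \<longrightarrow> R m x"
  using assms
proof (induct A rule: finite_ne_induct)
  case (insert x F)
  then obtain m where m: "m \<in> F" "\<forall>y\<in>F. y \<noteq> m \<longrightarrow> R m y"
    by blast
  have "x \<in> G" "m \<in> G" "s x = s m"
    using insert.prems m(1) by auto
  moreover have "x \<noteq> m"
    using insert.hyps m(1) by blast
  ultimately have "R x m \<or> R m x"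
    using R_total by blast
  then show ?case
  proof
    assume "R x m"
    then have "\<forall>y\<in>insert x F. y \<noteq> x \<longrightarrow> R x y"
      using m R_trans[of x m] by auto
    then show ?case
      by blast
  next
    assume "R m x"
    then show ?case
      using m by blast
  qed
qed simp

definition least_out :: "'v \<Rightarrow> 'e" where
  "least_out v = (SOME e. e \<in> G \<and> s e = v \<and> (\<forall>e'\<in>G. s e' = v \<and> e' \<noteq> e \<longrightarrow> R e e'))"

lemma least_out:
  assumes "v \<in> V"
  shows "least_out v \<in> G" "s (least_out v) = v"
    "e \<in> G \<Longrightarrow> s e = v \<Longrightarrow> e \<noteq> least_out v \<Longrightarrow> R (least_out v) e"
proof -
  have "\<exists>e. e \<in> G \<and> s e = v \<and> (\<forall>e'\<in>G. s e' = v \<and> e' \<noteq> e \<longrightarrow> R e e')"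
    using finite_out_edges_has_least[of "{e \<in> G. s e = v}" v] finite_edges out_edge_exists[OF assms]
    by auto
  from someI_ex[OF this]
  show "least_out v \<in> G" "s (least_out v) = v"
    "e \<in> G \<Longrightarrow> s e = v \<Longrightarrow> e \<noteq> least_out v \<Longrightarrow> R (least_out v) e"
    unfolding least_out_def by blast+
qed

lemma lowest_path_exists:
  assumes v: "v \<in> V"
  shows "\<exists>w. lowest_path s t G R v w"
proof -
  define w where "w = rec_nat (least_out v) (\<lambda>_ e. least_out (t e))"
  define src where "src n = (case n of 0 \<Rightarrow> v | Suc m \<Rightarrow> t (w m))" for n
  have w_src: "w n = least_out (src n)" for n
    by (cases n) (simp_all add: w_def src_def)
  have src_V: "src n \<in> V" for n
  proof (induct n)
    case (Suc n)
    then show ?case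
      using least_out(1) w_src edge_vertices(2) by (simp add: src_def)
  qed (simp add: src_def v)
  have w_G: "w n \<in> G" and s_w: "s (w n) = src n" for n
    using least_out(1,2)[OF src_V] w_src by simp_all
  have w_least: "R (w n) e" if "e \<in> G" "s e = s (w n)" "e \<noteq> w n" for n e
    using least_out(3)[OF src_V] w_src s_w that by simp
  have wi: "w \<in> ipaths s t G v"
    unfolding ipaths_def using w_G s_w by (simp add: src_def)
  have "dict R n (pref w n) p" if p: "p \<in> paths s t G v n" and ne: "p \<noteq> pref w n" for n p
  proof -
    note P = pathsD[OF p]
    have "\<exists>j. j < n \<and> p ! j \<noteq> w j"
      using ne P(1) nth_equalityI[of p "pref w n"] by auto
    then obtain l where l: "l < n" "p ! l \<noteq> w l" and before: "\<And>j. j < l \<Longrightarrow> p ! j = w j"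
      unfolding exists_least_iff[where P = "\<lambda>j. j < n \<and> p ! j \<noteq> w j"] by auto
    have "take l (pref w n) = take l p"
      using l(1) P(1) before by (intro nth_equalityI) auto
    moreover have "s (p ! l) = s (w l)"
    proof (cases l)
      case 0
      then show ?thesis using P(1,3) l(1) s_w by (cases p) (auto simp: src_def)
    next
      case (Suc j)
      then show ?thesis using P(4)[of j] l(1) before[of j] s_w by (simp add: src_def)
    qed
    moreover have "p ! l \<in> G"
      using P(1,2) l(1) nth_mem by blast
    ultimately show ?thesis
      unfolding dict_def using w_least l by (intro exI[of _ l]) auto
  qed
  with wi show ?thesis
    unfolding lowest_path_def by blast
qed

lemma lowest_path_least:
  assumes "lowest_path s t G R v w" "p \<in> paths s t G v n" "p \<noteq> pref w n"
  shows "dict R n (pref w n) p"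
proof -
  have "n \<noteq> 0"
    using assms(2,3) pathsD(1)[OF assms(2)] by auto
  with assms show ?thesis
    unfolding lowest_path_def by simp
qed

lemma lowest_path_unique:
  assumes w1: "lowest_path s t G R v w1" and w2: "lowest_path s t G R v w2"
  shows "w1 = w2"
proof
  fix m
  let ?p1 = "pref w1 (Suc m)" and ?p2 = "pref w2 (Suc m)"
  have "?p1 \<in> paths s t G v (Suc m)" "?p2 \<in> paths s t G v (Suc m)"
    using w1 w2 by (simp_all add: lowest_path_def pref_in_paths)
  then have "?p1 \<noteq> ?p2 \<Longrightarrow> dict R (Suc m) ?p1 ?p2 \<and> dict R (Suc m) ?p2 ?p1"
    using lowest_path_least[OF w1] lowest_path_least[OF w2] by auto
  then have "?p1 = ?p2"
    using dict_asym by auto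
  then have "?p1 ! m = ?p2 ! m"
    by simp
  then show "w1 m = w2 m"
    by simp
qed

definition lowest :: "'v \<Rightarrow> nat \<Rightarrow> 'e" where
  "lowest v = (THE w. lowest_path s t G R v w)"

definition highest :: "'v \<Rightarrow> nat \<Rightarrow> 'e" where
  "highest v = (THE w. highest_path s t G R v w)"

lemma lowest_path_lowest:
  assumes "v \<in> V"
  shows "lowest_path s t G R v (lowest v)"
proof -
  obtain w where w: "lowest_path s t G R v w"
    using lowest_path_exists[OF assms] by blast
  show ?thesis
    unfolding lowest_def using w lowest_path_unique[OF _ w] by (rule theI)
qed

lemma dict_converse: "dict (\<lambda>a b. R b a) k p q \<longleftrightarrow> dict R k q p"
  unfolding dict_def by (simp add: eq_commute)

lemma highest_path_iff_lowest_path_converse: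
  "highest_path s t G R v w \<longleftrightarrow> lowest_path s t G (\<lambda>a b. R b a) v w"
  unfolding highest_path_def lowest_path_def dict_converse ..

lemma ordered_gifs_converse: "ordered_gifs V G s t g E (\<lambda>a b. R b a)"
  by unfold_locales (rule ordered_converse)

lemma highest_path_highest:
  assumes "v \<in> V"
  shows "highest_path s t G R v (highest v)"
  using ordered_gifs.lowest_path_lowest[OF ordered_gifs_converse assms]
  unfolding ordered_gifs.lowest_def[OF ordered_gifs_converse] highest_def highest_path_iff_lowest_path_converse .

lemma lowest_in_ipaths: "v \<in> V \<Longrightarrow> lowest v \<in> ipaths s t G v"
  using lowest_path_lowest by (simp add: lowest_path_def)

lemma highest_in_ipaths: "v \<in> V \<Longrightarrow> highest v \<in> ipaths s t G v"
  using highest_path_highest by (simp add: highest_path_def)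

lemma lowest_prefix_least:
  "v \<in> V \<Longrightarrow> p \<in> paths s t G v n \<Longrightarrow> p \<noteq> pref (lowest v) n \<Longrightarrow> dict R n (pref (lowest v) n) p"
  using lowest_path_least[OF lowest_path_lowest] .

lemma highest_prefix_greatest:
  "v \<in> V \<Longrightarrow> p \<in> paths s t G v n \<Longrightarrow> p \<noteq> pref (highest v) n \<Longrightarrow> dict R n p (pref (highest v) n)"
  using ordered_gifs.lowest_path_least[OF ordered_gifs_converse, folded highest_path_iff_lowest_path_converse,
      OF highest_path_highest]
  unfolding dict_converse .

lemma head_eq: "head G s t g E R v = proj g t E (lowest v)"
  by (simp add: head_def lowest_def)

lemma tail_eq: "tail G s t g E R v = proj g t E (highest v)"
  by (simp add: tail_def highest_def)

lemma not_dict_lowest: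
  "v \<in> V \<Longrightarrow> p \<in> paths s t G v n \<Longrightarrow> \<not> dict R n p (pref (lowest v) n)"
  using lowest_prefix_least dict_asym by metis

lemma not_dict_highest:
  "v \<in> V \<Longrightarrow> p \<in> paths s t G v n \<Longrightarrow> \<not> dict R n (pref (highest v) n) p"
  using highest_prefix_greatest dict_asym by metis

lemma adjacent_edges_imp_adjacent_paths:
  assumes ab: "adjacent R {e \<in> G. s e = i} a b"
  shows "adjacent (dict R (Suc m)) (paths s t G i (Suc m))
           (a # pref (highest (t a)) m) (b # pref (lowest (t b)) m)"
    (is "adjacent ?dict ?paths ?p ?q")
proof -
  have a: "a \<in> G" "s a = i" "t a \<in> V" and b: "b \<in> G" "s b = i" "t b \<in> V" and "R a b"
    using ab edge_vertices(2) unfolding adjacent_def by auto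
  have no_edge_between: "\<not> (R a c \<and> R c b)" if "c \<in> G" "s c = i" for c
    using ab that unfolding adjacent_def by blast
  have "\<not> (?dict ?p r \<and> ?dict r ?q)" if path: "r \<in> ?paths" for r
  proof -
    obtain c x where r: "r = c # x"
      using pathsD(1)[OF path] by (cases r) auto
    then have c: "c \<in> G" "s c = i" "x \<in> paths s t G (t c) m"
      using path by (simp_all add: Cons_in_paths_iff)
    then show ?thesis
      unfolding r dict_Cons_Cons
      using no_edge_between[OF c(1,2)] not_dict_highest[OF a(3)] not_dict_lowest[OF b(3)] by auto
  qed
  moreover have "?p \<in> ?paths" "?q \<in> ?paths"
    using Cons_pref_in_paths[OF a(1) highest_in_ipaths[OF a(3)]]
      Cons_pref_in_paths[OF b(1) lowest_in_ipaths[OF b(3)]] a(2) b(2) by simp_all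
  moreover have "?dict ?p ?q"
    using \<open>R a b\<close> by (simp add: dict_Cons_Cons)
  ultimately show ?thesis
    unfolding adjacent_def by blast
qed

lemma adjacent_pathsE:
  assumes adj: "adjacent (dict R k) (paths s t G i k) p q"
  obtains u a b m where "p = u @ a # pref (highest (t a)) m" "q = u @ b # pref (lowest (t b)) m"
    "adjacent R {e \<in> G. s e = s a} a b"
proof -
  have P: "p \<in> paths s t G i k" and Q: "q \<in> paths s t G i k" and "dict R k p q"
    using adj unfolding adjacent_def by auto
  then obtain l where l: "l < k" "take l p = take l q" "R (p ! l) (q ! l)"
    unfolding dict_def by blast
  define u a b m where "u = take l p" and "a = p ! l" and "b = q ! l" and "m = k - Suc l"
  define x y where "x = drop (Suc l) p" and "y = drop (Suc l) q"
  have p: "p = u @ a # x" and q: "q = u @ b # y"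
    unfolding u_def a_def b_def x_def y_def using l pathsD(1)[OF P] pathsD(1)[OF Q]
    by (metis id_take_nth_drop)+
  have k: "k = length u + Suc m"
    unfolding u_def m_def using l(1) pathsD(1)[OF P] by simp
  have "length x = m" "length y = m"
    using pathsD(1)[OF P] pathsD(1)[OF Q] k unfolding p q by simp_all
  then have "a # x \<in> paths s t G (s a) (Suc m)" "b # y \<in> paths s t G (s b) (Suc m)"
    using suffix_in_paths[OF P[unfolded p]] suffix_in_paths[OF Q[unfolded q]] by simp_all
  then have a: "a \<in> G" "x \<in> paths s t G (t a) m" "t a \<in> V" and b: "b \<in> G" "y \<in> paths s t G (t b) m" "t b \<in> V"
    using edge_vertices(2) by (auto simp: Cons_in_paths_iff)
  have "R a b" "s b = s a"
    using l(3) R_edges unfolding a_def b_def by auto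
  have no_path_between: "\<not> (dict R (Suc m) (a # x) (c # z) \<and> dict R (Suc m) (c # z) (b # y))"
    if "c \<in> G" "s c = s a" "z \<in> paths s t G (t c) m" for c z
  proof -
    have "u @ c # z \<in> paths s t G i k"
      using branch_in_paths[OF P[unfolded p]] that pathsD(1)[OF a(2)] by (simp add: Cons_in_paths_iff)
    then show ?thesis
      using adj dict_append_same[of u "Suc m"] unfolding adjacent_def p q k by blast
  qed
  have "x = pref (highest (t a)) m"
  proof (rule ccontr)
    assume "x \<noteq> pref (highest (t a)) m"
    then have "dict R m x (pref (highest (t a)) m)"
      using highest_prefix_greatest a by blast
    then show False
      using no_path_between[OF a(1) refl pref_in_paths[OF highest_in_ipaths[OF a(3)]]] \<open>R a b\<close>
      by (simp add: dict_Cons_Cons)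
  qed
  moreover have "y = pref (lowest (t b)) m"
  proof (rule ccontr)
    assume "y \<noteq> pref (lowest (t b)) m"
    then have "dict R m (pref (lowest (t b)) m) y"
      using lowest_prefix_least b by blast
    then show False
      using no_path_between[OF b(1) \<open>s b = s a\<close> pref_in_paths[OF lowest_in_ipaths[OF b(3)]]] \<open>R a b\<close>
      by (simp add: dict_Cons_Cons)
  qed
  moreover have "adjacent R {e \<in> G. s e = s a} a b"
  proof -
    have "\<not> (R a c \<and> R c b)" if "c \<in> G" "s c = s a" for c
    proof -
      have "t c \<in> V"
        using edge_vertices(2) that(1) by blast
      then show ?thesis
        using no_path_between[OF that pref_in_paths[OF lowest_in_ipaths]] by (auto simp: dict_Cons_Cons)
    qed
    then show ?thesis
      unfolding adjacent_def using a(1) b(1) \<open>R a b\<close> \<open>s b = s a\<close> by auto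
  qed
  ultimately show thesis
    using that p q by blast
qed

lemma chain_condition_imp_linear:
  assumes "chain_condition V G s t g E R"
  shows "linear_gifs V G s t g E R"
  unfolding linear_gifs_def
proof (intro ballI allI impI)
  fix i k p q
  assume "adjacent (dict R k) (paths s t G i k) p q"
  then obtain u a b m where p: "p = u @ a # pref (highest (t a)) m"
    and q: "q = u @ b # pref (lowest (t b)) m" and ab: "adjacent R {e \<in> G. s e = s a} a b"
    by (rule adjacent_pathsE)
  have a: "a \<in> G" "s a \<in> V" "t a \<in> V" and b: "b \<in> G" "t b \<in> V"
    using ab edge_vertices unfolding adjacent_def by auto
  have "g a (proj g t E (highest (t a))) = g b (proj g t E (lowest (t b)))"
    using assms a(2) ab unfolding chain_condition_def tail_eq head_eq by blast
  then have "gcomp g u (g a (proj g t E (highest (t a)))) \<in> cyl g t E p \<inter> cyl g t E q"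
    unfolding p q
    using gcomp_proj_in_cyl[OF a(1) highest_in_ipaths[OF a(3)]]
      gcomp_proj_in_cyl[OF b(1) lowest_in_ipaths[OF b(2)]] by simp
  then show "cyl g t E p \<inter> cyl g t E q \<noteq> {}"
    by blast
qed

lemma linear_imp_chain_condition:
  assumes "linear_gifs V G s t g E R"
  shows "chain_condition V G s t g E R"
  unfolding chain_condition_def tail_eq head_eq
proof (intro ballI allI impI)
  fix i a b
  assume i: "i \<in> V" and ab: "adjacent R {e \<in> G. s e = i} a b"
  have a: "a \<in> G" "t a \<in> V" and b: "b \<in> G" "t b \<in> V"
    using ab edge_vertices unfolding adjacent_def by auto
  obtain r D where r: "0 < r" "r < 1"
    and D: "\<And>i k p x y. p \<in> paths s t G i k \<Longrightarrow> 0 < k \<Longrightarrow> x \<in> cyl g t E p \<Longrightarrow> y \<in> cyl g t E p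
      \<Longrightarrow> dist x y \<le> D * r ^ k"
    using cyl_diameter_bound by blast
  let ?x = "g a (proj g t E (highest (t a)))" and ?y = "g b (proj g t E (lowest (t b)))"
  have "dist ?x ?y \<le> (2 * D * r) * r ^ m" for m
  proof -
    let ?p = "a # pref (highest (t a)) m" and ?q = "b # pref (lowest (t b)) m"
    have adj: "adjacent (dict R (Suc m)) (paths s t G i (Suc m)) ?p ?q"
      using adjacent_edges_imp_adjacent_paths[OF ab] .
    moreover have "1 \<le> Suc m"
      by simp
    ultimately obtain z where z: "z \<in> cyl g t E ?p" "z \<in> cyl g t E ?q"
      using assms[unfolded linear_gifs_def] i by blast
    have "?x \<in> cyl g t E ?p" "?y \<in> cyl g t E ?q"
      using gcomp_proj_in_cyl[OF a(1) highest_in_ipaths[OF a(2)], of "[]" m]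
        gcomp_proj_in_cyl[OF b(1) lowest_in_ipaths[OF b(2)], of "[]" m] by simp_all
    then have "dist ?x z \<le> D * r ^ Suc m" "dist z ?y \<le> D * r ^ Suc m"
      using adj z D[of _ i "Suc m"] unfolding adjacent_def by blast+
    then show ?thesis
      using dist_triangle[of ?x ?y z] by simp
  qed
  then show "?x = ?y"
    using r by (intro eq_if_dist_le_geometric[of r]) auto
qed

end

theorem theorem1p2:
  fixes V :: "'v set" and G :: "'e set" and s t :: "'e \<Rightarrow> 'v"
    and g :: "'e \<Rightarrow> 'a::euclidean_space \<Rightarrow> 'a" and E :: "'v \<Rightarrow> 'a set"
    and prec :: "'e \<Rightarrow> 'e \<Rightarrow> bool"
  assumes "gifs V G s t g"
    and "invariant_sets V G s t g E"
    and "ordered V G s prec"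
  shows "linear_gifs V G s t g E prec \<longleftrightarrow> chain_condition V G s t g E prec"
proof -
  interpret ordered_gifs V G s t g E prec
    using assms by unfold_locales
  show ?thesis
    using linear_imp_chain_condition chain_condition_imp_linear by blast
qed

end
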